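(* Let $\mathcal{A}\in\mathbb{R}^{n\times n\times n\times n}$ be a real symmetric tensor. Then $\mathcal{A}(x,x,x,x)=\sum_{i,j,k,l}\mathcal{A}_{ijkl}x_ix_jx_kx_l\ge0$ for all $x\in\mathbb{R}^n$ if and only if $\sum_{i,j,k,l}\mathcal{A}_{ijkl}X_{ij}X_{kl}\ge 0$ for all real symmetric positive semidefinite $X\in\mathbb{R}^{n\times n}$.
   Context: A tensor is symmetric if its entries $\mathcal{A}_{ijkl}$ are invariant under all permutations of $(i,j,k,l)$. *)

theory Defs
  imports "HOL-Analysis.Analysis" "HOL-Combinatorics.Permutations"
begin

definition symmetric_tensor4 :: "real^'n^'n^'n^'n \<Rightarrow> bool" where
  "symmetric_tensor4 A \<longleftrightarrow>
     (\<forall>p idx. p permutes {0..<(4::nat)} \<longrightarrow>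
        A $ idx 0 $ idx 1 $ idx 2 $ idx 3
        = A $ idx (p 0) $ idx (p 1) $ idx (p 2) $ idx (p 3))"

definition tensor4_form :: "real^'n^'n^'n^'n \<Rightarrow> real^'n \<Rightarrow> real" where
  "tensor4_form A x = (\<Sum>i\<in>UNIV. \<Sum>j\<in>UNIV. \<Sum>k\<in>UNIV. \<Sum>l\<in>UNIV.
      A $ i $ j $ k $ l * x $ i * x $ j * x $ k * x $ l)"

definition tensor4_matrix_form :: "real^'n^'n^'n^'n \<Rightarrow> real^'n^'n \<Rightarrow> real" where
  "tensor4_matrix_form A X = (\<Sum>i\<in>UNIV. \<Sum>j\<in>UNIV. \<Sum>k\<in>UNIV. \<Sum>l\<in>UNIV.
      A $ i $ j $ k $ l * X $ i $ j * X $ k $ l)"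

definition sym_psd :: "real^'n^'n \<Rightarrow> bool" where
  "sym_psd X \<longleftrightarrow> transpose X = X \<and> (\<forall>v. 0 \<le> v \<bullet> (X *v v))"

end

theory Submission
  imports Defs
begin

text \<open>
  The rank-one matrices \<open>x x\<^sup>T\<close> are positive semidefinite, which gives one direction.
  Conversely every positive semidefinite \<open>X\<close> is a sum \<open>\<Sum>\<^sub>p v\<^sub>p v\<^sub>p\<^sup>T\<close> (peel off rank-one
  pieces one diagonal entry at a time). If \<open>g = \<Sum>\<^sub>p \<xi>\<^sub>p v\<^sub>p\<close> with independent standard
  Gaussians \<open>\<xi>\<^sub>p\<close>, Wick's formula and the symmetry of \<open>\<A>\<close> give
  \<open>\<bbbE> \<A>(w+g,w+g,w+g,w+g) = \<A>(w,w,w,w) + 6 \<A>(w w\<^sup>T, X) + 3 \<A>(X, X)\<close>, and this is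
  nonnegative whenever the quartic form is. Replacing each Gaussian \<open>\<xi>\<^sub>p\<close> by a fair
  \<open>\<plusminus>1\<close> sign plus a correction \<open>2 \<A>(v\<^sub>p,v\<^sub>p,v\<^sub>p,v\<^sub>p) \<ge> 0\<close> turns this into an elementary
  induction over the rank-one pieces; at \<open>w = 0\<close> it yields \<open>\<A>(X, X) \<ge> 0\<close>.
\<close>

definition outer_prod :: "real^'n \<Rightarrow> real^'n \<Rightarrow> real^'n^'n" where
  "outer_prod a b = (\<chi> i j. a $ i * b $ j)"

lemma outer_prod_zero_left [simp]: "outer_prod 0 b = 0"
  unfolding outer_prod_def by (simp add: vec_eq_iff)

lemma outer_prod_parallelogram:
  "outer_prod (w + v) (w + v) + outer_prod (w - v) (w - v)
    = 2 *\<^sub>R outer_prod w w + 2 *\<^sub>R outer_prod v v"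
  unfolding outer_prod_def by (simp add: vec_eq_iff algebra_simps)

lemma outer_prod_mult_vec: "outer_prod a b *v y = (b \<bullet> y) *\<^sub>R a"
  unfolding outer_prod_def
  by (simp add: vec_eq_iff matrix_vector_mult_def inner_vec_def sum_distrib_left ac_simps)

lemma sym_psd_outer_prod: "sym_psd (outer_prod x x)"
proof -
  have "transpose (outer_prod x x) = outer_prod x x"
    by (simp add: vec_eq_iff transpose_def outer_prod_def mult.commute)
  moreover have "v \<bullet> (outer_prod x x *v v) = (x \<bullet> v)\<^sup>2" for v
    by (simp add: outer_prod_mult_vec inner_commute power2_eq_square)
  ultimately show ?thesis unfolding sym_psd_def by simp
qed

lemma sym_psd_inner_commute:
  assumes "sym_psd X" shows "y \<bullet> (X *v u) = u \<bullet> (X *v y)"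
proof -
  have "y \<bullet> (X *v u) = (transpose X *v y) \<bullet> u"
    by (simp add: dot_lmul_matrix)
  also have "\<dots> = u \<bullet> (X *v y)" using assms by (simp add: sym_psd_def inner_commute)
  finally show ?thesis .
qed

lemma quadratic_nonneg_imp_discriminant:
  fixes c d q :: real
  assumes "0 \<le> d" and nonneg: "\<And>t. 0 \<le> d * t\<^sup>2 + 2 * c * t + q"
  shows "c\<^sup>2 \<le> d * q"
proof (cases "d = 0")
  case True
  show ?thesis
  proof (rule ccontr)
    assume "\<not> ?thesis"
    with True have "c \<noteq> 0" by auto
    have "0 \<le> d * (-(\<bar>q\<bar> + 1) / (2 * c))\<^sup>2 + 2 * c * (-(\<bar>q\<bar> + 1) / (2 * c)) + q"
      by (rule nonneg)
    also have "\<dots> = q - (\<bar>q\<bar> + 1)" using True \<open>c \<noteq> 0\<close> by (simp add: field_simps)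
    finally show False by linarith
  qed
next
  case False
  with \<open>0 \<le> d\<close> have "0 < d" by simp
  have "0 \<le> d * (-c / d)\<^sup>2 + 2 * c * (-c / d) + q" by (rule nonneg)
  also have "\<dots> = q - c\<^sup>2 / d" using \<open>0 < d\<close> by (simp add: field_simps power2_eq_square)
  finally show ?thesis using \<open>0 < d\<close> by (simp add: field_simps)
qed

lemma sym_psd_cauchy_schwarz:
  assumes X: "sym_psd X"
  shows "(y \<bullet> (X *v u))\<^sup>2 \<le> (u \<bullet> (X *v u)) * (y \<bullet> (X *v y))"
proof (rule quadratic_nonneg_imp_discriminant)
  have psd: "\<And>v. 0 \<le> v \<bullet> (X *v v)" using X unfolding sym_psd_def by blast
  then show "0 \<le> u \<bullet> (X *v u)" .
  fix t
  have "(y + t *\<^sub>R u) \<bullet> (X *v (y + t *\<^sub>R u))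
      = (u \<bullet> (X *v u)) * t\<^sup>2 + 2 * (y \<bullet> (X *v u)) * t + y \<bullet> (X *v y)"
    using sym_psd_inner_commute[OF X, of y u]
    by (simp add: power2_eq_square algebra_simps)
  then show "0 \<le> (u \<bullet> (X *v u)) * t\<^sup>2 + 2 * (y \<bullet> (X *v u)) * t + y \<bullet> (X *v y)"
    using psd by metis
qed

lemma axis_inner_mult_axis: "axis i 1 \<bullet> (X *v axis j 1) = X $ i $ j"
  by (simp add: matrix_vector_mult_basis inner_axis' column_def)

lemma sym_psd_diag_nonneg: "sym_psd X \<Longrightarrow> 0 \<le> X $ i $ i"
  unfolding sym_psd_def by (metis axis_inner_mult_axis)

lemma sym_psd_zero_diag:
  assumes "sym_psd X" "X $ j $ j = 0" shows "X $ i $ j = 0"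
  using sym_psd_cauchy_schwarz[OF assms(1), of "axis i 1" "axis j 1"] assms(2)
  by (simp add: axis_inner_mult_axis)

lemma sym_psd_entry_commute: "sym_psd X \<Longrightarrow> X $ j $ i = X $ i $ j"
  unfolding sym_psd_def by (metis transpose_def vec_lambda_beta)

lemma sym_psd_deflate:
  assumes X: "sym_psd X" and i: "X $ i $ i \<noteq> 0"
  obtains v X' where "X = outer_prod v v + X'" "sym_psd X'"
    "{j. X' $ j $ j \<noteq> 0} \<subset> {j. X $ j $ j \<noteq> 0}"
proof
  define d where "d = X $ i $ i"
  have "0 < d" using sym_psd_diag_nonneg[OF X, of i] i unfolding d_def by simp
  \<comment> \<open>One Cholesky step: subtracting \<open>v v\<^sup>T\<close> clears row and column \<open>i\<close>.\<close>
  define v where "v = (1 / sqrt d) *\<^sub>R (X *v axis i 1)"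
  define X' where "X' = X - outer_prod v v"
  have outer_v: "outer_prod v v $ a $ b = X $ a $ i * X $ b $ i / d" for a b
    using \<open>0 < d\<close> unfolding outer_prod_def v_def
    by (simp add: matrix_vector_mult_basis column_def field_simps real_sqrt_mult[symmetric])
  show "X = outer_prod v v + X'" unfolding X'_def by simp
  have "transpose X' = X'"
    unfolding X'_def
    by (simp add: vec_eq_iff transpose_def outer_v sym_psd_entry_commute[OF X] mult.commute)
  moreover have "0 \<le> y \<bullet> (X' *v y)" for y
  proof -
    have "(v \<bullet> y)\<^sup>2 = (y \<bullet> (X *v axis i 1))\<^sup>2 / d"
      using \<open>0 < d\<close> unfolding v_def by (simp add: inner_commute power_divide)
    also have "\<dots> \<le> y \<bullet> (X *v y)"
      using sym_psd_cauchy_schwarz[OF X, of y "axis i 1"] \<open>0 < d\<close>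
      by (simp add: axis_inner_mult_axis d_def divide_le_eq mult.commute)
    finally show ?thesis
      unfolding X'_def by (simp add: matrix_vector_mult_diff_rdistrib outer_prod_mult_vec
          inner_diff_right power2_eq_square inner_commute)
  qed
  ultimately show "sym_psd X'" unfolding sym_psd_def by blast
  have "X' $ i $ i = 0"
    using \<open>0 < d\<close> unfolding X'_def by (simp add: outer_v d_def power2_eq_square)
  moreover have "X' $ j $ j = 0" if "X $ j $ j = 0" for j
    using that unfolding X'_def
    by (simp add: outer_v sym_psd_zero_diag[OF X] sym_psd_entry_commute[OF X, of j i])
  ultimately show "{j. X' $ j $ j \<noteq> 0} \<subset> {j. X $ j $ j \<noteq> 0}" using i by blast
qed

lemma sym_psd_sum_outer_prod:
  assumes "sym_psd X"
  obtains vs where "X = (\<Sum>v\<leftarrow>vs. outer_prod v v)"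
  using assms
proof (induction "card {j. X $ j $ j \<noteq> 0}" arbitrary: X thesis rule: less_induct)
  case less
  show ?case
  proof (cases "\<exists>i. X $ i $ i \<noteq> 0")
    case False
    then have "X = 0" using sym_psd_zero_diag[OF less.prems(2)] by (simp add: vec_eq_iff)
    then show ?thesis using less.prems(1)[of "[]"] by simp
  next
    case True
    then obtain i where "X $ i $ i \<noteq> 0" by blast
    with less.prems(2) obtain v X' where X: "X = outer_prod v v + X'" and "sym_psd X'"
      and "{j. X' $ j $ j \<noteq> 0} \<subset> {j. X $ j $ j \<noteq> 0}"
      by (rule sym_psd_deflate)
    then have "card {j. X' $ j $ j \<noteq> 0} < card {j. X $ j $ j \<noteq> 0}"
      by (simp add: psubset_card_mono)
    then obtain vs where "X' = (\<Sum>v\<leftarrow>vs. outer_prod v v)"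
      using less.hyps \<open>sym_psd X'\<close> by blast
    then show ?thesis using less.prems(1)[of "v # vs"] X by simp
  qed
qed

lemma symmetric_tensor4_permute:
  assumes "symmetric_tensor4 A" "p permutes {0..<4}"
  shows "A $ ix ! 0 $ ix ! 1 $ ix ! 2 $ ix ! 3 = A $ ix ! p 0 $ ix ! p 1 $ ix ! p 2 $ ix ! p 3"
  using assms unfolding symmetric_tensor4_def by blast

lemma symmetric_tensor4_swap:
  assumes "symmetric_tensor4 A"
  shows symmetric_tensor4_swap01: "A $ i $ j $ k $ l = A $ j $ i $ k $ l"
    and symmetric_tensor4_swap12: "A $ i $ j $ k $ l = A $ i $ k $ j $ l"
    and symmetric_tensor4_swap23: "A $ i $ j $ k $ l = A $ i $ j $ l $ k"
  using symmetric_tensor4_permute[OF assms permutes_swap_id[of 0 _ 1], of "[i, j, k, l]"]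
    symmetric_tensor4_permute[OF assms permutes_swap_id[of 1 _ 2], of "[i, j, k, l]"]
    symmetric_tensor4_permute[OF assms permutes_swap_id[of 2 _ 3], of "[i, j, k, l]"]
  by (simp_all add: transpose_def)

definition tensor4_apply ::
    "real^'n^'n^'n^'n \<Rightarrow> real^'n \<Rightarrow> real^'n \<Rightarrow> real^'n \<Rightarrow> real^'n \<Rightarrow> real" where
  "tensor4_apply A a b c d = (\<Sum>i\<in>UNIV. \<Sum>j\<in>UNIV. \<Sum>k\<in>UNIV. \<Sum>l\<in>UNIV.
      A $ i $ j $ k $ l * a $ i * b $ j * c $ k * d $ l)"

definition tensor4_pairing :: "real^'n^'n^'n^'n \<Rightarrow> real^'n^'n \<Rightarrow> real^'n^'n \<Rightarrow> real"
  where "tensor4_pairing A X Y = (\<Sum>i\<in>UNIV. \<Sum>j\<in>UNIV. \<Sum>k\<in>UNIV. \<Sum>l\<in>UNIV.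
      A $ i $ j $ k $ l * X $ i $ j * Y $ k $ l)"

lemma tensor4_form_eq_apply: "tensor4_form A x = tensor4_apply A x x x x"
  unfolding tensor4_form_def tensor4_apply_def ..

lemma tensor4_matrix_form_eq_pairing: "tensor4_matrix_form A X = tensor4_pairing A X X"
  unfolding tensor4_matrix_form_def tensor4_pairing_def ..

lemma tensor4_pairing_outer_prod:
  "tensor4_pairing A (outer_prod a b) (outer_prod c d) = tensor4_apply A a b c d"
  unfolding tensor4_pairing_def tensor4_apply_def outer_prod_def by (simp add: ac_simps)

lemma tensor4_apply_add:
  "tensor4_apply A (a + a') b c d = tensor4_apply A a b c d + tensor4_apply A a' b c d"
  "tensor4_apply A a (b + b') c d = tensor4_apply A a b c d + tensor4_apply A a b' c d"
  "tensor4_apply A a b (c + c') d = tensor4_apply A a b c d + tensor4_apply A a b c' d"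
  "tensor4_apply A a b c (d + d') = tensor4_apply A a b c d + tensor4_apply A a b c d'"
  unfolding tensor4_apply_def by (simp_all add: sum.distrib[symmetric] algebra_simps)

lemma tensor4_apply_minus:
  "tensor4_apply A (- a) b c d = - tensor4_apply A a b c d"
  "tensor4_apply A a (- b) c d = - tensor4_apply A a b c d"
  "tensor4_apply A a b (- c) d = - tensor4_apply A a b c d"
  "tensor4_apply A a b c (- d) = - tensor4_apply A a b c d"
  unfolding tensor4_apply_def by (simp_all add: sum_negf[symmetric])

lemma tensor4_apply_zero [simp]: "tensor4_apply A 0 0 0 0 = 0"
  unfolding tensor4_apply_def by simp

lemma tensor4_pairing_add_left:
  "tensor4_pairing A (X + X') Y = tensor4_pairing A X Y + tensor4_pairing A X' Y"
  unfolding tensor4_pairing_def by (simp add: sum.distrib[symmetric] algebra_simps)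

lemma tensor4_pairing_add_right:
  "tensor4_pairing A X (Y + Y') = tensor4_pairing A X Y + tensor4_pairing A X Y'"
  unfolding tensor4_pairing_def by (simp add: sum.distrib[symmetric] algebra_simps)

lemma tensor4_pairing_scaleR_left: "tensor4_pairing A (r *\<^sub>R X) Y = r * tensor4_pairing A X Y"
  unfolding tensor4_pairing_def by (simp add: sum_distrib_left algebra_simps)

lemma tensor4_pairing_zero [simp]: "tensor4_pairing A 0 Y = 0" "tensor4_pairing A X 0 = 0"
  unfolding tensor4_pairing_def by simp_all

lemma tensor4_apply_swap:
  assumes "symmetric_tensor4 A"
  shows tensor4_apply_swap01: "tensor4_apply A a b c d = tensor4_apply A b a c d"
    and tensor4_apply_swap12: "tensor4_apply A a b c d = tensor4_apply A a c b d"
    and tensor4_apply_swap23: "tensor4_apply A a b c d = tensor4_apply A a b d c"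
proof -
  show "tensor4_apply A a b c d = tensor4_apply A b a c d"
    unfolding tensor4_apply_def
    by (subst sum.swap) (simp add: symmetric_tensor4_swap01[OF assms] ac_simps)
  show "tensor4_apply A a b c d = tensor4_apply A a c b d"
    unfolding tensor4_apply_def
    by (subst (2) sum.swap) (simp add: symmetric_tensor4_swap12[OF assms] ac_simps)
  show "tensor4_apply A a b c d = tensor4_apply A a b d c"
    unfolding tensor4_apply_def
    by (subst (3) sum.swap) (simp add: symmetric_tensor4_swap23[OF assms] ac_simps)
qed

lemma tensor4_pairing_commute:
  assumes "symmetric_tensor4 A"
  shows "tensor4_pairing A X Y = tensor4_pairing A Y X"
proof -
  have swap_pairs: "A $ k $ l $ i $ j = A $ i $ j $ k $ l" for i j k l
    by (metis symmetric_tensor4_swap[OF assms])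
  show ?thesis
    unfolding tensor4_pairing_def sum.cartesian_product
    by (rule sum.reindex_bij_witness[where i="\<lambda>(i, j, k, l). (k, l, i, j)"
          and j="\<lambda>(i, j, k, l). (k, l, i, j)"]) (auto simp: swap_pairs)
qed

lemma tensor4_apply_add_diff_diag:
  assumes "symmetric_tensor4 A"
  shows "tensor4_apply A (w + v) (w + v) (w + v) (w + v)
      + tensor4_apply A (w - v) (w - v) (w - v) (w - v)
    = 2 * tensor4_apply A w w w w + 2 * tensor4_apply A v v v v + 12 * tensor4_apply A w w v v"
proof -
  note swaps = tensor4_apply_swap[OF assms]
  have "tensor4_apply A w v w v = tensor4_apply A w w v v"
    "tensor4_apply A w v v w = tensor4_apply A w w v v"
    "tensor4_apply A v w w v = tensor4_apply A w w v v"
    "tensor4_apply A v w v w = tensor4_apply A w w v v"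
    "tensor4_apply A v v w w = tensor4_apply A w w v v"
    by (metis swaps)+
  then show ?thesis
    unfolding diff_conv_add_uminus by (simp only: tensor4_apply_add tensor4_apply_minus)
qed

text \<open>\<open>\<bbbE> \<A>(w+g,w+g,w+g,w+g)\<close> for a centred Gaussian \<open>g\<close> with covariance \<open>X\<close>.\<close>

definition tensor4_gaussian_moment :: "real^'n^'n^'n^'n \<Rightarrow> real^'n \<Rightarrow> real^'n^'n \<Rightarrow> real"
  where "tensor4_gaussian_moment A w X =
    tensor4_apply A w w w w + 6 * tensor4_pairing A (outer_prod w w) X + 3 * tensor4_pairing A X X"

lemma tensor4_gaussian_moment_add_outer_prod:
  assumes "symmetric_tensor4 A"
  shows "tensor4_gaussian_moment A w (outer_prod v v + X)
    = (tensor4_gaussian_moment A (w + v) X + tensor4_gaussian_moment A (w - v) X) / 2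
      + 2 * tensor4_apply A v v v v"
proof -
  have "tensor4_pairing A (outer_prod (w + v) (w + v)) X
        + tensor4_pairing A (outer_prod (w - v) (w - v)) X
      = 2 * tensor4_pairing A (outer_prod w w) X + 2 * tensor4_pairing A (outer_prod v v) X"
    by (simp only: tensor4_pairing_add_left[symmetric] outer_prod_parallelogram
        tensor4_pairing_add_left tensor4_pairing_scaleR_left)
  then show ?thesis
    using tensor4_apply_add_diff_diag[OF assms, of w v]
      tensor4_pairing_commute[OF assms, of X "outer_prod v v"]
    unfolding tensor4_gaussian_moment_def
    by (simp add: tensor4_pairing_add_left tensor4_pairing_add_right tensor4_pairing_outer_prod
        field_simps)
qed

lemma tensor4_gaussian_moment_nonneg:
  assumes "symmetric_tensor4 A" and nonneg: "\<And>x. 0 \<le> tensor4_apply A x x x x"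
  shows "0 \<le> tensor4_gaussian_moment A w (\<Sum>v\<leftarrow>vs. outer_prod v v)"
proof (induction vs arbitrary: w)
  case Nil
  show ?case using nonneg by (simp add: tensor4_gaussian_moment_def)
next
  case (Cons v vs)
  then show ?case
    using nonneg[of v] by (simp add: tensor4_gaussian_moment_add_outer_prod[OF assms(1)])
qed

theorem theorem5p2:
  fixes A :: "real^'n^'n^'n^'n"
  assumes "symmetric_tensor4 A"
  shows "(\<forall>x. 0 \<le> tensor4_form A x) \<longleftrightarrow> (\<forall>X. sym_psd X \<longrightarrow> 0 \<le> tensor4_matrix_form A X)"
proof
  assume "\<forall>x. 0 \<le> tensor4_form A x"
  then have nonneg: "0 \<le> tensor4_apply A x x x x" for x by (simp add: tensor4_form_eq_apply)
  show "\<forall>X. sym_psd X \<longrightarrow> 0 \<le> tensor4_matrix_form A X"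
  proof (intro allI impI)
    fix X :: "real^'n^'n"
    assume "sym_psd X"
    then obtain vs where X: "X = (\<Sum>v\<leftarrow>vs. outer_prod v v)" by (rule sym_psd_sum_outer_prod)
    have "tensor4_gaussian_moment A 0 X = 3 * tensor4_pairing A X X"
      by (simp add: tensor4_gaussian_moment_def)
    with tensor4_gaussian_moment_nonneg[OF assms nonneg, of 0 vs] X
    show "0 \<le> tensor4_matrix_form A X" by (simp add: tensor4_matrix_form_eq_pairing)
  qed
next
  assume "\<forall>X. sym_psd X \<longrightarrow> 0 \<le> tensor4_matrix_form A X"
  then show "\<forall>x. 0 \<le> tensor4_form A x"
    using sym_psd_outer_prod
    by (auto simp: tensor4_form_eq_apply tensor4_matrix_form_eq_pairing
        tensor4_pairing_outer_prod[symmetric])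
qed

end
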